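(* Let $(\alpha_n)_{n\ge0}\in\mathbb{D}^\infty$ and $k\in\mathbb{Z}_+$. If $G^{(1)},G^{(2)}\in A_{2k}$ have the same image under the quotient map $\psi_{2k}:A_{2k}\to B_{2k}$, then there exists $C<\infty$ (possibly depending on $G^{(1)},G^{(2)}$, but not on $N$) such that for every $N\in\mathbb{Z}_+$, $$\Big|\sum_{n=0}^N[\phi_{2k}(G^{(1)})]_n-\sum_{n=0}^N[\phi_{2k}(G^{(2)})]_n\Big|<C .$$
   Context: $\mathbb{D}$ is the open unit disk. $A_{2k}:=\mathbb{C}[x_1,y_1,\dots,x_k,y_k]$, $B_{2k}:=A_{2k}/(\prod_{i=1}^kx_iy_i-1)$, and $\psi_{2k}$ is the natural quotient homomorphism. $\phi_{2k}$ is the linear map from $A_{2k}$ to complex sequences defined on monomials by $[\phi_{2k}(\prod_{i=1}^k x_i^{\beta_i}y_i^{\gamma_i})]_n=\prod_{i=1}^k\alpha_{n+\beta_i}\overline{\alpha_{n+\gamma_i}}$ for all $\beta_i,\gamma_i\in\mathbb{N}$. *)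

theory Defs
  imports "HOL-Analysis.Analysis" "HOL-Library.Poly_Mapping"
begin

text \<open>Multivariate polynomials over the complex numbers in the variables
  x_i = (i, False) and y_i = (i, True), i :: nat, represented as finitely supported
  maps from monomials (finitely supported exponent maps) to coefficients.\<close>

type_synonym cvar = "nat \<times> bool"
type_synonym cpoly = "((cvar \<Rightarrow>\<^sub>0 nat) \<Rightarrow>\<^sub>0 complex)"

text \<open>Membership in A_{2k} = C[x_1,y_1,...,x_k,y_k] (variables indexed 0..k-1).\<close>
definition inA :: "nat \<Rightarrow> cpoly \<Rightarrow> bool" where
  "inA k G \<longleftrightarrow> (\<forall>m\<in>Poly_Mapping.keys G. \<forall>v\<in>Poly_Mapping.keys (m :: cvar \<Rightarrow>\<^sub>0 nat). fst v < k)"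

definition prodxy :: "nat \<Rightarrow> cpoly" where
  "prodxy k = Poly_Mapping.single (\<Sum>i<k. Poly_Mapping.single (i, False) 1 + Poly_Mapping.single (i, True) 1) 1"

text \<open>psi_{2k}(G1) = psi_{2k}(G2) in B_{2k} = A_{2k}/(prod x_i y_i - 1), i.e. G1 - G2 lies
  in the ideal of A_{2k} generated by prod x_i y_i - 1.\<close>
definition same_psi :: "nat \<Rightarrow> cpoly \<Rightarrow> cpoly \<Rightarrow> bool" where
  "same_psi k G1 G2 \<longleftrightarrow> (\<exists>H. inA k H \<and> G1 - G2 = H * (prodxy k - 1))"

definition phi :: "nat \<Rightarrow> (nat \<Rightarrow> complex) \<Rightarrow> cpoly \<Rightarrow> nat \<Rightarrow> complex" where
  "phi k \<alpha> G n = (\<Sum>m\<in>Poly_Mapping.keys G. Poly_Mapping.lookup G m *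
      (\<Prod>i<k. \<alpha> (n + Poly_Mapping.lookup m (i, False)) * cnj (\<alpha> (n + Poly_Mapping.lookup m (i, True)))))"

end

theory Submission imports Defs begin

text \<open>Multiplying a polynomial by \<open>\<Prod>i<k. x\<^sub>i y\<^sub>i\<close> raises every exponent by one, which under
  \<open>\<phi>\<^sub>2\<^sub>k\<close> shifts the sequence index by one. Hence \<open>\<phi>\<^sub>2\<^sub>k(H (\<Prod> x\<^sub>i y\<^sub>i - 1))\<close> is the difference
  sequence of \<open>\<phi>\<^sub>2\<^sub>k(H)\<close>, and its partial sums telescope to two values of \<open>\<phi>\<^sub>2\<^sub>k(H)\<close>. Since
  \<open>|\<alpha>\<^sub>n| < 1\<close>, every entry of \<open>\<phi>\<^sub>2\<^sub>k(H)\<close> is bounded by the \<open>\<ell>\<^sup>1\<close>-norm of the coefficients of \<open>H\<close>.\<close>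

definition phi_monomial :: "nat \<Rightarrow> (nat \<Rightarrow> complex) \<Rightarrow> (cvar \<Rightarrow>\<^sub>0 nat) \<Rightarrow> nat \<Rightarrow> complex" where
  "phi_monomial k \<alpha> m n =
     (\<Prod>i<k. \<alpha> (n + Poly_Mapping.lookup m (i, False)) * cnj (\<alpha> (n + Poly_Mapping.lookup m (i, True))))"

definition xy_exponent :: "nat \<Rightarrow> cvar \<Rightarrow>\<^sub>0 nat" where
  "xy_exponent k = (\<Sum>i<k. Poly_Mapping.single (i, False) 1 + Poly_Mapping.single (i, True) 1)"

lemma prodxy_eq_single: "prodxy k = Poly_Mapping.single (xy_exponent k) 1"
  by (simp add: prodxy_def xy_exponent_def)

lemma lookup_xy_exponent: "i < k \<Longrightarrow> Poly_Mapping.lookup (xy_exponent k) (i, b) = 1"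
  unfolding xy_exponent_def
  by (cases b) (simp_all add: lookup_sum lookup_add lookup_single when_def)

lemma phi_monomial_add_xy_exponent:
  "phi_monomial k \<alpha> (m + xy_exponent k) n = phi_monomial k \<alpha> m (Suc n)"
  unfolding phi_monomial_def by (intro prod.cong) (simp_all add: lookup_add lookup_xy_exponent)

lemma norm_phi_monomial_le_1:
  assumes "\<And>n. norm (\<alpha> n) \<le> 1"
  shows "norm (phi_monomial k \<alpha> m n) \<le> 1"
  unfolding phi_monomial_def prod_norm[symmetric]
  by (rule prod_le_1) (simp_all add: norm_mult mult_le_one assms)

lemma phi_eq_sum_superset:
  assumes "finite S" "Poly_Mapping.keys G \<subseteq> S"
  shows "phi k \<alpha> G n = (\<Sum>m\<in>S. Poly_Mapping.lookup G m * phi_monomial k \<alpha> m n)"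
  unfolding phi_def phi_monomial_def
  by (rule sum.mono_neutral_left) (use assms in \<open>auto simp: in_keys_iff\<close>)

lemma phi_diff: "phi k \<alpha> (A - B) n = phi k \<alpha> A n - phi k \<alpha> B n"
proof -
  let ?S = "Poly_Mapping.keys A \<union> Poly_Mapping.keys B"
  have "Poly_Mapping.keys (A - B) \<subseteq> ?S" by (auto simp: in_keys_iff lookup_minus)
  then show ?thesis
    by (simp add: phi_eq_sum_superset[of ?S] lookup_minus left_diff_distrib sum_subtractf)
qed

lemma lookup_mult_single_one:
  fixes H :: "'a::cancel_comm_monoid_add \<Rightarrow>\<^sub>0 'b::comm_semiring_1"
  shows "Poly_Mapping.lookup (H * Poly_Mapping.single p 1) (m + p) = Poly_Mapping.lookup H m"
proof -
  have single_factor: "(\<Sum>q. Poly_Mapping.lookup (Poly_Mapping.single p 1) q when m + p = l + q)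
      = ((1::'b) when l = m)" for l
  proof -
    have "(\<Sum>q. Poly_Mapping.lookup (Poly_Mapping.single p 1) q when m + p = l + q)
        = (\<Sum>q. ((1::'b) when l = m) when q = p)"
      by (rule Sum_any.cong) (auto simp: lookup_single when_def)
    then show ?thesis by simp
  qed
  have "Poly_Mapping.lookup (H * Poly_Mapping.single p 1) (m + p)
      = Sum_any (\<lambda>l. Poly_Mapping.lookup H l when l = m)"
    by (simp add: lookup_mult single_factor mult_when)
  then show ?thesis by simp
qed

lemma phi_mult_prodxy: "phi k \<alpha> (H * prodxy k) n = phi k \<alpha> H (Suc n)"
proof -
  let ?p = "xy_exponent k"
  have "Poly_Mapping.keys (H * prodxy k) \<subseteq> (\<lambda>m. m + ?p) ` Poly_Mapping.keys H"
    using keys_mult[of H "prodxy k"] by (auto simp: prodxy_eq_single)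
  then have "phi k \<alpha> (H * prodxy k) n
      = (\<Sum>m\<in>(\<lambda>m. m + ?p) ` Poly_Mapping.keys H. Poly_Mapping.lookup (H * prodxy k) m * phi_monomial k \<alpha> m n)"
    by (simp add: phi_eq_sum_superset)
  also have "\<dots> = (\<Sum>m\<in>Poly_Mapping.keys H. Poly_Mapping.lookup (H * prodxy k) (m + ?p) * phi_monomial k \<alpha> (m + ?p) n)"
    by (subst sum.reindex) (auto simp: inj_on_def)
  also have "\<dots> = (\<Sum>m\<in>Poly_Mapping.keys H. Poly_Mapping.lookup H m * phi_monomial k \<alpha> m (Suc n))"
    by (simp add: prodxy_eq_single lookup_mult_single_one phi_monomial_add_xy_exponent)
  also have "\<dots> = phi k \<alpha> H (Suc n)"
    by (rule phi_eq_sum_superset[symmetric]) simp_all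
  finally show ?thesis .
qed

lemma sum_phi_mult_prodxy_minus_one:
  "(\<Sum>n\<le>N. phi k \<alpha> (H * (prodxy k - 1)) n) = phi k \<alpha> H (Suc N) - phi k \<alpha> H 0"
proof -
  have "(\<Sum>n\<le>N. phi k \<alpha> (H * (prodxy k - 1)) n) = (\<Sum>n<Suc N. phi k \<alpha> H (Suc n) - phi k \<alpha> H n)"
    by (simp add: right_diff_distrib phi_diff phi_mult_prodxy lessThan_Suc_atMost)
  also have "\<dots> = phi k \<alpha> H (Suc N) - phi k \<alpha> H 0"
    by (rule sum_lessThan_telescope)
  finally show ?thesis .
qed

lemma norm_phi_le_coeff_norm_sum:
  assumes "\<And>n. norm (\<alpha> n) \<le> 1"
  shows "norm (phi k \<alpha> H n) \<le> (\<Sum>m\<in>Poly_Mapping.keys H. norm (Poly_Mapping.lookup H m))"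
proof -
  have "norm (phi k \<alpha> H n) \<le> (\<Sum>m\<in>Poly_Mapping.keys H. norm (Poly_Mapping.lookup H m * phi_monomial k \<alpha> m n))"
    unfolding phi_eq_sum_superset[OF finite_keys order_refl] by (rule norm_sum)
  also have "\<dots> \<le> (\<Sum>m\<in>Poly_Mapping.keys H. norm (Poly_Mapping.lookup H m))"
    by (intro sum_mono)
       (simp add: norm_mult mult_left_le norm_phi_monomial_le_1[OF assms])
  finally show ?thesis .
qed

theorem lemma2:
  fixes \<alpha> :: "nat \<Rightarrow> complex" and k :: nat and G1 G2 :: cpoly
  assumes "\<And>n. norm (\<alpha> n) < 1"
    and "k \<ge> 1"
    and "inA k G1" and "inA k G2"
    and "same_psi k G1 G2"
  shows "\<exists>C::real. \<forall>N::nat. N \<ge> 1 \<longrightarrow>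
           norm ((\<Sum>n\<le>N. phi k \<alpha> G1 n) - (\<Sum>n\<le>N. phi k \<alpha> G2 n)) < C"
proof -
  obtain H where H: "G1 - G2 = H * (prodxy k - 1)"
    using assms(5) by (auto simp: same_psi_def)
  define B where "B = (\<Sum>m\<in>Poly_Mapping.keys H. norm (Poly_Mapping.lookup H m))"
  have bound: "norm (phi k \<alpha> H n) \<le> B" for n
    unfolding B_def by (rule norm_phi_le_coeff_norm_sum) (simp add: assms(1) less_imp_le)
  have "norm ((\<Sum>n\<le>N. phi k \<alpha> G1 n) - (\<Sum>n\<le>N. phi k \<alpha> G2 n)) < 2 * B + 1" for N
  proof -
    have "(\<Sum>n\<le>N. phi k \<alpha> G1 n) - (\<Sum>n\<le>N. phi k \<alpha> G2 n) = phi k \<alpha> H (Suc N) - phi k \<alpha> H 0"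
      by (simp add: sum_subtractf[symmetric] phi_diff[symmetric] H sum_phi_mult_prodxy_minus_one)
    then show ?thesis
      using norm_triangle_ineq4[of "phi k \<alpha> H (Suc N)" "phi k \<alpha> H 0"] bound[of "Suc N"] bound[of 0]
      by simp
  qed
  then show ?thesis by blast
qed

end
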